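(* Let $G=\langle A,B\rangle$ be an abstract rank one group with unipotent subgroups $A,B$ and $V$ a $\mathbb{Z}G$-module with $[V,A,A,A]=0$, $[V,G,G,G]\neq0$, $[V,G]=V$ and $C_V(G)=0$, and suppose $A_0:=C_A([V,A])\cap C_A(V/C_V(A))\neq1$. Then: (a) $V=C_V(A)\oplus[V,B]$; (b) $C_V(A)=[V,A_0]=[V,a]$ for all $a\in A_0\setminus\{1\}$; (c) $[V,A]=C_V(a)$ for all $a\in A_0\setminus\{1\}$; (d) if $A$ is not abelian, then $C_V(A)=[V,A,A]$.
   Context: $G$ acts on $V$ on the right, $[v,g]=-v+vg$; $[X,Y]$ is the subgroup generated by all such commutators, $[X,Y,Z]=[[X,Y],Z]$. Abstract rank one group with unipotent subgroups $A,B$: $G=\langle A,B\rangle$, $A\neq B$ nilpotent, for each $a\in A\setminus\{1\}$ there is $b\in B\setminus\{1\}$ with $B^a=A^b$, and for each $b\in B\setminus\{1\}$ some $a\in A\setminus\{1\}$ with $A^b=B^a$. *)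

theory Defs
  imports "HOL-Algebra.Algebra"
begin

definition grp_comm_set :: "('g, 'b) monoid_scheme \<Rightarrow> 'g set \<Rightarrow> 'g set \<Rightarrow> 'g set" where
  "grp_comm_set G S1 Y = {monoid.mult G (monoid.mult G (monoid.mult G (m_inv G x) (m_inv G y)) x) y | x y. x \<in> S1 \<and> y \<in> Y}"

fun lower_central :: "('g, 'b) monoid_scheme \<Rightarrow> 'g set \<Rightarrow> nat \<Rightarrow> 'g set" where
  "lower_central G H 0 = H"
| "lower_central G H (Suc n) = generate G (grp_comm_set G (lower_central G H n) H)"

definition nilpotent_subgroup :: "('g, 'b) monoid_scheme \<Rightarrow> 'g set \<Rightarrow> bool" where
  "nilpotent_subgroup G H \<longleftrightarrow> subgroup H G \<and> (\<exists>n. lower_central G H n = {monoid.one G})"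

definition conj_set :: "('g, 'b) monoid_scheme \<Rightarrow> 'g set \<Rightarrow> 'g \<Rightarrow> 'g set" where
  "conj_set G S1 g = (\<lambda>x. monoid.mult G (monoid.mult G (m_inv G g) x) g) ` S1"

definition rank_one_group :: "('g, 'b) monoid_scheme \<Rightarrow> 'g set \<Rightarrow> 'g set \<Rightarrow> bool" where
  "rank_one_group G A B \<longleftrightarrow> group G \<and> subgroup A G \<and> subgroup B G \<and>
     generate G (A \<union> B) = carrier G \<and> A \<noteq> B \<and>
     nilpotent_subgroup G A \<and> nilpotent_subgroup G B \<and>
     (\<forall>a \<in> A - {monoid.one G}. \<exists>b \<in> B - {monoid.one G}. conj_set G B a = conj_set G A b) \<and>
     (\<forall>b \<in> B - {monoid.one G}. \<exists>a \<in> A - {monoid.one G}. conj_set G A b = conj_set G B a)"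

text \<open>V (the whole type 'v) is a ZG-module with right action act.\<close>
definition ZG_module :: "('g, 'b) monoid_scheme \<Rightarrow> ('v::ab_group_add \<Rightarrow> 'g \<Rightarrow> 'v) \<Rightarrow> bool" where
  "ZG_module G act \<longleftrightarrow>
     (\<forall>v. act v (monoid.one G) = v) \<and>
     (\<forall>v. \<forall>g \<in> carrier G. \<forall>h \<in> carrier G. act (act v g) h = act v (monoid.mult G g h)) \<and>
     (\<forall>v w. \<forall>g \<in> carrier G. act (v + w) g = act v g + act w g)"

definition add_subgroup :: "'v::ab_group_add set \<Rightarrow> bool" where
  "add_subgroup H \<longleftrightarrow> 0 \<in> H \<and> (\<forall>x\<in>H. \<forall>y\<in>H. x + y \<in> H) \<and> (\<forall>x\<in>H. - x \<in> H)"

definition add_span :: "'v::ab_group_add set \<Rightarrow> 'v set" where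
  "add_span S = \<Inter>{H. add_subgroup H \<and> S \<subseteq> H}"

text \<open>[S1,Y] = subgroup generated by all [v,g] = -v + vg, v in S1, g in Y.\<close>
definition mcomm :: "('v::ab_group_add \<Rightarrow> 'g \<Rightarrow> 'v) \<Rightarrow> 'v set \<Rightarrow> 'g set \<Rightarrow> 'v set" where
  "mcomm act S1 Y = add_span {- v + act v g | v g. v \<in> S1 \<and> g \<in> Y}"

text \<open>Centralizer C_X(Y) of group elements Y in a subset S1 of V.\<close>
definition fixed :: "('v \<Rightarrow> 'g \<Rightarrow> 'v) \<Rightarrow> 'v set \<Rightarrow> 'g set \<Rightarrow> 'v set" where
  "fixed act S1 Y = {v \<in> S1. \<forall>g \<in> Y. act v g = v}"

text \<open>C_A(W) for W a subset of V: elements of A acting trivially on W.\<close>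
definition centr_on :: "('v \<Rightarrow> 'g \<Rightarrow> 'v) \<Rightarrow> 'g set \<Rightarrow> 'v set \<Rightarrow> 'g set" where
  "centr_on act A W = {a \<in> A. \<forall>w \<in> W. act w a = w}"

text \<open>C_A(V/U) for U a subgroup of V: elements of A acting trivially on V/U.\<close>
definition centr_quot :: "('v::ab_group_add \<Rightarrow> 'g \<Rightarrow> 'v) \<Rightarrow> 'g set \<Rightarrow> 'v set \<Rightarrow> 'g set" where
  "centr_quot act A U = {a \<in> A. \<forall>v. act v a - v \<in> U}"

end

theory Submission
  imports Defs
begin

text \<open>
  Two facts about rank one groups drive the argument: a subgroup containing \<open>B\<close> and one
  nontrivial element of \<open>A\<close> is all of \<open>G\<close>, and \<open>A\<close> is conjugate to \<open>B\<close> by an element that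
  carries \<open>A\<^sub>0\<close> into \<open>B\<^sub>0\<close>. Since \<open>[V,G] = V\<close> and \<open>C\<^sub>V(G) = 0\<close>, the first gives
  \<open>V = [V,a] + [V,B]\<close> and \<open>C\<^sub>V(B) \<inter> C\<^sub>V(a) = 0\<close> for every \<open>a \<in> A - 1\<close>. For \<open>a \<in> A\<^sub>0 - 1\<close>
  we have \<open>[V,a] \<subseteq> C\<^sub>V(A)\<close> and \<open>[V,A] \<subseteq> C\<^sub>V(a)\<close>, while a nontrivial \<open>e \<in> B\<^sub>0\<close> forces
  \<open>C\<^sub>V(A) \<inter> [V,B] = 0\<close>; comparing the decompositions \<open>V = [V,a] + [V,B] = [V,e] + [V,A]\<close>
  gives (a)--(c). For (d), \<open>[V,A,A,A] = 0\<close> puts a nontrivial commutator \<open>c\<close> of \<open>A\<close> into \<open>A\<^sub>0\<close>,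
  and then \<open>C\<^sub>V(A) = [V,c] \<subseteq> [V,A,A] \<subseteq> C\<^sub>V(A)\<close>.
\<close>

lemma add_subgroup_zero: "add_subgroup H \<Longrightarrow> 0 \<in> H"
  unfolding add_subgroup_def by blast

lemma add_subgroup_add: "add_subgroup H \<Longrightarrow> x \<in> H \<Longrightarrow> y \<in> H \<Longrightarrow> x + y \<in> H"
  unfolding add_subgroup_def by blast

lemma add_subgroup_diff: "add_subgroup H \<Longrightarrow> x \<in> H \<Longrightarrow> y \<in> H \<Longrightarrow> x - y \<in> H"
  unfolding add_subgroup_def diff_conv_add_uminus by blast

lemma add_subgroup_set_plus:
  assumes "add_subgroup P" "add_subgroup Q"
  shows "add_subgroup {x + y | x y. x \<in> P \<and> y \<in> Q}"
  unfolding add_subgroup_def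
proof (intro conjI ballI)
  show "0 \<in> {x + y | x y. x \<in> P \<and> y \<in> Q}"
    using assms by (force simp: add_subgroup_def)
next
  fix u v assume "u \<in> {x + y | x y. x \<in> P \<and> y \<in> Q}" "v \<in> {x + y | x y. x \<in> P \<and> y \<in> Q}"
  then obtain x y x' y' where "u = x + y" "v = x' + y'" "x \<in> P" "y \<in> Q" "x' \<in> P" "y' \<in> Q"
    by blast
  moreover have "u + v = (x + x') + (y + y')" if "u = x + y" "v = x' + y'"
    using that by (simp add: algebra_simps)
  ultimately show "u + v \<in> {x + y | x y. x \<in> P \<and> y \<in> Q}"
    using assms unfolding add_subgroup_def by blast
next
  fix u assume "u \<in> {x + y | x y. x \<in> P \<and> y \<in> Q}"
  then obtain x y where "u = x + y" "x \<in> P" "y \<in> Q" by blast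
  moreover have "- u = - x + - y" if "u = x + y" using that by simp
  ultimately show "- u \<in> {x + y | x y. x \<in> P \<and> y \<in> Q}"
    using assms unfolding add_subgroup_def by blast
qed

lemma add_subgroup_mcomm: "add_subgroup (mcomm act S Y)"
  unfolding mcomm_def add_span_def add_subgroup_def by blast

lemma mcomm_memI: "v \<in> S \<Longrightarrow> g \<in> Y \<Longrightarrow> act v g - v \<in> mcomm act S Y"
  unfolding mcomm_def add_span_def by (auto simp: add.commute)

lemma mcomm_least:
  assumes "add_subgroup W" "\<And>v g. v \<in> S \<Longrightarrow> g \<in> Y \<Longrightarrow> act v g - v \<in> W"
  shows "mcomm act S Y \<subseteq> W"
  unfolding mcomm_def add_span_def using assms by (auto simp: add.commute)

lemma mcomm_mono: "Y \<subseteq> Y' \<Longrightarrow> mcomm act S Y \<subseteq> mcomm act S Y'"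
  by (rule mcomm_least[OF add_subgroup_mcomm]) (auto intro: mcomm_memI)

lemma mcomm_eq_zero_imp_fixed: "mcomm act S Y = {0} \<Longrightarrow> S \<subseteq> fixed act UNIV Y"
  unfolding fixed_def using mcomm_memI[of _ S _ Y act] by fastforce

lemma (in group) inv_mult_cancel_left [simp]:
  "x \<in> carrier G \<Longrightarrow> y \<in> carrier G \<Longrightarrow> inv x \<otimes> (x \<otimes> y) = y"
  by (simp add: m_assoc[symmetric])

lemma (in group) mult_inv_cancel_left [simp]:
  "x \<in> carrier G \<Longrightarrow> y \<in> carrier G \<Longrightarrow> x \<otimes> (inv x \<otimes> y) = y"
  by (simp add: m_assoc[symmetric])

lemma rank_one_group_sym: "rank_one_group G A B \<Longrightarrow> rank_one_group G B A"
  unfolding rank_one_group_def by (auto simp: Un_commute)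

lemma (in group) conj_set_eq_imp_image:
  assumes "A \<subseteq> carrier G" "B \<subseteq> carrier G" "a \<in> carrier G" "b \<in> carrier G"
    and "conj_set G B a = conj_set G A b"
  shows "B = (\<lambda>x. (a \<otimes> inv b) \<otimes> x \<otimes> inv (a \<otimes> inv b)) ` A"
proof -
  have "B = (\<lambda>x. x) ` B" by simp
  also have "\<dots> = (\<lambda>y. a \<otimes> y \<otimes> inv a) ` conj_set G B a"
    using assms(2,3) unfolding conj_set_def image_image
    by (intro image_cong) (auto simp: m_assoc subset_iff)
  also have "\<dots> = (\<lambda>y. a \<otimes> y \<otimes> inv a) ` conj_set G A b"
    using assms(5) by simp
  also have "\<dots> = (\<lambda>x. (a \<otimes> inv b) \<otimes> x \<otimes> inv (a \<otimes> inv b)) ` A"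
    unfolding conj_set_def image_image
    using assms(1,3,4) by (intro image_cong) (auto simp: m_assoc inv_mult_group subset_iff)
  finally show ?thesis .
qed

lemma (in group) rank_one_group_conj_image:
  assumes "rank_one_group G A B" "a \<in> A - {\<one>}"
  obtains b where "b \<in> B" "B = (\<lambda>x. (a \<otimes> inv b) \<otimes> x \<otimes> inv (a \<otimes> inv b)) ` A"
proof -
  from assms obtain b where b: "b \<in> B" "conj_set G B a = conj_set G A b"
    unfolding rank_one_group_def by blast
  have "A \<subseteq> carrier G" "B \<subseteq> carrier G"
    using assms(1) subgroup.subset unfolding rank_one_group_def by blast+
  with assms(2) b show ?thesis
    by (intro that[OF b(1)] conj_set_eq_imp_image) auto
qed

lemma (in group) rank_one_group_subgroup_eq_carrier:
  assumes r: "rank_one_group G A B" and S: "subgroup S G" "B \<subseteq> S"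
    and a: "a \<in> A - {\<one>}" "a \<in> S"
  shows "S = carrier G"
proof -
  obtain b where b: "b \<in> B" and B: "B = (\<lambda>x. (a \<otimes> inv b) \<otimes> x \<otimes> inv (a \<otimes> inv b)) ` A"
    using rank_one_group_conj_image[OF r a(1)] .
  have sub: "subgroup A G" "subgroup B G" and gen: "generate G (A \<union> B) = carrier G"
    using r unfolding rank_one_group_def by blast+
  define p where "p = a \<otimes> inv b"
  have p: "p \<in> S" "p \<in> carrier G"
    unfolding p_def using S a b sub by (auto intro: subgroup.m_closed subgroup.m_inv_closed subgroup.mem_carrier)
  have "A \<subseteq> S"
  proof
    fix x assume x: "x \<in> A"
    then have "p \<otimes> x \<otimes> inv p \<in> S" using B S(2) unfolding p_def by blast
    moreover have "x = inv p \<otimes> (p \<otimes> x \<otimes> inv p) \<otimes> p"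
      using x sub(1) p(2) by (simp add: m_assoc subgroup.mem_carrier[of A])
    ultimately show "x \<in> S"
      using S(1) p(1) by (metis subgroup.m_closed subgroup.m_inv_closed)
  qed
  then have "carrier G \<subseteq> S"
    using gen S by (metis Un_subset_iff generate_subgroup_incl)
  then show ?thesis using S(1) subgroup.subset by blast
qed

locale right_ZG_module = group G for G :: "('g, 'b) monoid_scheme" (structure) +
  fixes act :: "'v::ab_group_add \<Rightarrow> 'g \<Rightarrow> 'v"
  assumes ZG_module: "ZG_module G act"
begin

lemma act_one [simp]: "act v \<one> = v"
  using ZG_module unfolding ZG_module_def by simp

lemma act_mult: "g \<in> carrier G \<Longrightarrow> h \<in> carrier G \<Longrightarrow> act v (g \<otimes> h) = act (act v g) h"
  using ZG_module unfolding ZG_module_def by simp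

lemma act_add: "g \<in> carrier G \<Longrightarrow> act (v + w) g = act v g + act w g"
  using ZG_module unfolding ZG_module_def by simp

lemma act_zero [simp]: "g \<in> carrier G \<Longrightarrow> act 0 g = 0"
  using act_add[of g 0 0] by simp

lemma act_minus: "g \<in> carrier G \<Longrightarrow> act (- v) g = - act v g"
  using act_add[of g "- v" v] by (simp add: eq_neg_iff_add_eq_0)

lemma act_diff: "g \<in> carrier G \<Longrightarrow> act (v - w) g = act v g - act w g"
  using act_add[of g v "- w"] by (simp add: act_minus)

lemma act_act_inv [simp]: "g \<in> carrier G \<Longrightarrow> act (act v g) (inv g) = v"
  using act_mult[of g "inv g" v] by simp

lemma act_inv_act [simp]: "g \<in> carrier G \<Longrightarrow> act (act v (inv g)) g = v"
  using act_mult[of "inv g" g v] by simp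

lemma add_subgroup_fixed: "Y \<subseteq> carrier G \<Longrightarrow> add_subgroup (fixed act UNIV Y)"
  unfolding add_subgroup_def fixed_def
  by (auto simp: act_add act_minus subset_iff)

lemma stabilizer_subgroup: "subgroup {g \<in> carrier G. act v g = v} G"
proof (rule subgroupI)
  fix g assume "g \<in> {g \<in> carrier G. act v g = v}"
  then show "inv g \<in> {g \<in> carrier G. act v g = v}"
    using act_act_inv[of g v] by simp
qed (auto simp: act_mult)

lemma trivial_mod_subgroup:
  assumes "add_subgroup W"
  shows "subgroup {g \<in> carrier G. \<forall>v. act v g - v \<in> W} G"
proof (rule subgroupI)
  fix g assume "g \<in> {g \<in> carrier G. \<forall>v. act v g - v \<in> W}"
  then show "inv g \<in> {g \<in> carrier G. \<forall>v. act v g - v \<in> W}"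
  proof (intro CollectI conjI allI)
    fix v
    have "act (act v (inv g)) g - act v (inv g) \<in> W" using \<open>g \<in> _\<close> by blast
    then have "v - act v (inv g) \<in> W" using \<open>g \<in> _\<close> by simp
    then show "act v (inv g) - v \<in> W" using assms by (metis add_subgroup_def minus_diff_eq)
  qed (use \<open>g \<in> _\<close> in simp)
next
  fix g h
  assume g: "g \<in> {g \<in> carrier G. \<forall>v. act v g - v \<in> W}"
    and h: "h \<in> {g \<in> carrier G. \<forall>v. act v g - v \<in> W}"
  show "g \<otimes> h \<in> {g \<in> carrier G. \<forall>v. act v g - v \<in> W}"
  proof (intro CollectI conjI allI)
    fix v
    have "(act (act v g) h - act v g) + (act v g - v) \<in> W"
      using g h assms unfolding add_subgroup_def by blast
    then show "act v (g \<otimes> h) - v \<in> W" using g h by (simp add: act_mult)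
  qed (use g h in simp)
qed (use add_subgroup_zero[OF assms] in auto)

lemma act_conj: "p \<in> carrier G \<Longrightarrow> x \<in> carrier G \<Longrightarrow> act v (p \<otimes> x \<otimes> inv p) = act (act (act v p) x) (inv p)"
  by (simp add: act_mult)

text \<open>With \<open>u = w(xy)\<^sup>-\<^sup>1\<close> one has \<open>[w, [x,y]] = [u,x,y] - [u,y,x]\<close>.\<close>
lemma act_commutator_mem:
  assumes Y: "Y \<subseteq> carrier G" "x \<in> Y" "y \<in> Y" and S: "act w (inv x \<otimes> inv y) \<in> S"
  shows "act w (inv x \<otimes> inv y \<otimes> x \<otimes> y) - w \<in> mcomm act (mcomm act S Y) Y"
proof -
  define u where "u = act w (inv x \<otimes> inv y)"
  have x: "x \<in> carrier G" and y: "y \<in> carrier G" using Y by blast+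
  have xy: "act (act u x) y = act w (inv x \<otimes> inv y \<otimes> x \<otimes> y)"
    unfolding u_def using x y by (simp add: act_mult)
  have yx: "act (act u y) x = w"
    unfolding u_def using x y by (simp add: act_mult flip: m_assoc)
  have "act w (inv x \<otimes> inv y \<otimes> x \<otimes> y) - w
      = (act (act u x - u) y - (act u x - u)) - (act (act u y - u) x - (act u y - u))"
    using x y by (simp only: act_diff xy yx) (simp add: algebra_simps)
  moreover have "u \<in> S" using S unfolding u_def .
  then have "act (act u x - u) y - (act u x - u) \<in> mcomm act (mcomm act S Y) Y"
    and "act (act u y - u) x - (act u y - u) \<in> mcomm act (mcomm act S Y) Y"
    using Y by (blast intro: mcomm_memI)+
  ultimately show ?thesis by (metis add_subgroup_diff add_subgroup_mcomm)
qed

end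

definition A0 :: "('v::ab_group_add \<Rightarrow> 'g \<Rightarrow> 'v) \<Rightarrow> 'g set \<Rightarrow> 'g set" where
  "A0 act A = centr_on act A (mcomm act UNIV A) \<inter> centr_quot act A (fixed act UNIV A)"

lemma mem_A0_iff:
  "a \<in> A0 act A \<longleftrightarrow> a \<in> A \<and> (\<forall>w \<in> mcomm act UNIV A. act w a = w) \<and> (\<forall>v. act v a - v \<in> fixed act UNIV A)"
  unfolding A0_def centr_on_def centr_quot_def by blast

lemma (in right_ZG_module) commutator_mem_A0:
  assumes A: "subgroup A G" "mcomm act (mcomm act (mcomm act UNIV A) A) A = {0}"
    and xy: "x \<in> A" "y \<in> A"
  shows "inv x \<otimes> inv y \<otimes> x \<otimes> y \<in> A0 act A"
proof -
  have Ac: "A \<subseteq> carrier G" using A(1) subgroup.subset by blast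
  have "inv x \<otimes> inv y \<in> A"
    using A(1) xy by (intro subgroup.m_closed subgroup.m_inv_closed)
  have "act w (inv x \<otimes> inv y \<otimes> x \<otimes> y) = w" if w: "w \<in> mcomm act UNIV A" for w
  proof -
    have "(act w (inv x \<otimes> inv y) - w) + w \<in> mcomm act UNIV A"
      using w \<open>inv x \<otimes> inv y \<in> A\<close> by (intro add_subgroup_add[OF add_subgroup_mcomm] mcomm_memI UNIV_I)
    then have "act w (inv x \<otimes> inv y) \<in> mcomm act UNIV A" by simp
    from act_commutator_mem[OF Ac xy this]
    have "act w (inv x \<otimes> inv y \<otimes> x \<otimes> y) - w \<in> {0}" using A(2) by simp
    then show ?thesis by simp
  qed
  moreover have "act v (inv x \<otimes> inv y \<otimes> x \<otimes> y) - v \<in> fixed act UNIV A" for v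
    using act_commutator_mem[OF Ac xy UNIV_I] mcomm_eq_zero_imp_fixed[OF A(2)] by blast
  moreover have "inv x \<otimes> inv y \<otimes> x \<otimes> y \<in> A"
    using A(1) xy by (intro subgroup.m_closed subgroup.m_inv_closed)
  ultimately show ?thesis unfolding mem_A0_iff by blast
qed

lemma (in right_ZG_module) A0_conj:
  assumes p: "p \<in> carrier G" and A: "A \<subseteq> carrier G" and a: "a \<in> A0 act A"
  shows "p \<otimes> a \<otimes> inv p \<in> A0 act ((\<lambda>x. p \<otimes> x \<otimes> inv p) ` A)"
proof -
  let ?c = "\<lambda>x. p \<otimes> x \<otimes> inv p"
  have ac: "a \<in> carrier G" using a A by (auto simp: mem_A0_iff)
  have conj_diff: "act v (?c x) - v = act (act (act v p) x - act v p) (inv p)"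
    if "x \<in> carrier G" for v x
    using p that by (simp add: act_conj act_diff)
  have fixed_conj: "act z (inv p) \<in> fixed act UNIV (?c ` A)" if "z \<in> fixed act UNIV A" for z
    using that p A unfolding fixed_def by (auto simp: act_conj subset_iff)
  have "mcomm act UNIV (?c ` A) \<subseteq> fixed act UNIV {?c a}"
  proof (rule mcomm_least[OF add_subgroup_fixed])
    show "{?c a} \<subseteq> carrier G" using p ac by simp
    fix v y assume "y \<in> ?c ` A"
    then obtain x where x: "x \<in> A" "y = ?c x" by blast
    define z where "z = act (act v p) x - act v p"
    have "act z a = z" using a x(1) unfolding z_def by (auto simp: mem_A0_iff intro: mcomm_memI)
    then have "act (act z (inv p)) (?c a) = act z (inv p)" using p ac by (simp add: act_conj)
    then show "act v y - v \<in> fixed act UNIV {?c a}"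
      using x A p unfolding fixed_def z_def by (auto simp: conj_diff subset_iff)
  qed
  moreover have "act v (?c a) - v \<in> fixed act UNIV (?c ` A)" for v
    unfolding conj_diff[OF ac] using a by (intro fixed_conj) (simp add: mem_A0_iff)
  moreover have "?c a \<in> ?c ` A" using a by (auto simp: mem_A0_iff)
  ultimately show ?thesis unfolding mem_A0_iff fixed_def by blast
qed

locale rank_one_module = right_ZG_module +
  fixes A B
  assumes rank_one: "rank_one_group G A B"
    and mcomm_carrier: "mcomm act UNIV (carrier G) = UNIV"
    and fixed_carrier: "fixed act UNIV (carrier G) = {0}"
begin

lemma swap: "rank_one_module G act B A"
  using rank_one_group_sym[OF rank_one] mcomm_carrier fixed_carrier
  by (intro rank_one_module.intro right_ZG_module_axioms rank_one_module_axioms.intro)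

lemma A_subset: "A \<subseteq> carrier G" and B_subset: "B \<subseteq> carrier G"
  using rank_one subgroup.subset unfolding rank_one_group_def by blast+

lemma fixed_B_and_elem_eq_zero:
  assumes "x \<in> fixed act UNIV B" "a \<in> A - {\<one>}" "act x a = x"
  shows "x = 0"
proof -
  have "{g \<in> carrier G. act x g = x} = carrier G"
    using assms A_subset B_subset unfolding fixed_def
    by (intro rank_one_group_subgroup_eq_carrier[OF rank_one stabilizer_subgroup]) auto
  then have "x \<in> fixed act UNIV (carrier G)" unfolding fixed_def by blast
  then show ?thesis using fixed_carrier by blast
qed

lemma mcomm_elem_plus_mcomm_eq_UNIV:
  assumes a: "a \<in> A - {\<one>}"
  shows "{x + y | x y. x \<in> mcomm act UNIV {a} \<and> y \<in> mcomm act UNIV B} = UNIV"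
    (is "?W = UNIV")
proof -
  have W: "add_subgroup ?W" by (intro add_subgroup_set_plus add_subgroup_mcomm)
  have "B \<subseteq> {g \<in> carrier G. \<forall>v. act v g - v \<in> ?W}"
    using B_subset add_subgroup_zero[OF add_subgroup_mcomm] by (force intro: mcomm_memI)
  moreover have "a \<in> {g \<in> carrier G. \<forall>v. act v g - v \<in> ?W}"
    using a A_subset add_subgroup_zero[OF add_subgroup_mcomm] by (force intro: mcomm_memI)
  ultimately have "{g \<in> carrier G. \<forall>v. act v g - v \<in> ?W} = carrier G"
    using a by (intro rank_one_group_subgroup_eq_carrier[OF rank_one trivial_mod_subgroup[OF W]])
  then have "mcomm act UNIV (carrier G) \<subseteq> ?W"
    by (intro mcomm_least[OF W]) blast
  then show ?thesis using mcomm_carrier by blast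
qed

lemma one_mem_A0: "\<one> \<in> A0 act A"
  using rank_one add_subgroup_zero[OF add_subgroup_fixed[OF A_subset]]
  by (simp add: mem_A0_iff rank_one_group_def subgroup.one_closed)

lemma mcomm_A0_elem_subset_fixed: "a \<in> A0 act A \<Longrightarrow> mcomm act UNIV {a} \<subseteq> fixed act UNIV A"
  by (intro mcomm_least add_subgroup_fixed A_subset) (auto simp: mem_A0_iff)

lemma mcomm_subset_fixed_A0_elem: "a \<in> A0 act A \<Longrightarrow> mcomm act UNIV A \<subseteq> fixed act UNIV {a}"
  by (auto simp: mem_A0_iff fixed_def)

lemma A0_conj_mem_B0:
  assumes a: "a \<in> A0 act A - {\<one>}"
  obtains e where "e \<in> A0 act B - {\<one>}"
proof -
  have aA: "a \<in> A" and ac: "a \<in> carrier G" using a A_subset by (auto simp: mem_A0_iff)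
  obtain b where b: "b \<in> B" and B: "B = (\<lambda>x. (a \<otimes> inv b) \<otimes> x \<otimes> inv (a \<otimes> inv b)) ` A"
    using rank_one_group_conj_image[OF rank_one] aA a by blast
  define p where "p = a \<otimes> inv b"
  have p: "p \<in> carrier G" unfolding p_def using b ac B_subset by blast
  have "p \<otimes> a \<otimes> inv p \<in> A0 act B"
    unfolding B p_def[symmetric] using p A_subset a by (intro A0_conj) auto
  moreover have "p \<otimes> a \<otimes> inv p \<noteq> \<one>"
  proof
    assume "p \<otimes> a \<otimes> inv p = \<one>"
    moreover have "a = inv p \<otimes> (p \<otimes> a \<otimes> inv p) \<otimes> p" using p ac by (simp add: m_assoc)
    ultimately show False using a p by simp
  qed
  ultimately show ?thesis by (intro that) blast
qed

lemma fixed_inter_mcomm_eq_zero: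
  assumes "e \<in> A0 act B - {\<one>}"
  shows "fixed act UNIV A \<inter> mcomm act UNIV B = {0}"
proof -
  have "x = 0" if "x \<in> fixed act UNIV A" "x \<in> mcomm act UNIV B" for x
    using that assms
    by (intro rank_one_module.fixed_B_and_elem_eq_zero[OF swap]) (auto simp: mem_A0_iff)
  then show ?thesis
    using add_subgroup_zero[OF add_subgroup_fixed[OF A_subset]] add_subgroup_zero[OF add_subgroup_mcomm]
    by blast
qed

lemma fixed_eq_mcomm_A0_elem:
  assumes a: "a \<in> A0 act A - {\<one>}"
  shows "fixed act UNIV A = mcomm act UNIV {a}"
proof
  show "mcomm act UNIV {a} \<subseteq> fixed act UNIV A"
    using a by (simp add: mcomm_A0_elem_subset_fixed)
  show "fixed act UNIV A \<subseteq> mcomm act UNIV {a}"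
  proof
    fix u assume u: "u \<in> fixed act UNIV A"
    obtain x y where xy: "u = x + y" "x \<in> mcomm act UNIV {a}" "y \<in> mcomm act UNIV B"
      using mcomm_elem_plus_mcomm_eq_UNIV a by (blast dest: mem_A0_iff[THEN iffD1])
    obtain e where "e \<in> A0 act B - {\<one>}" using A0_conj_mem_B0[OF a] .
    moreover have "y \<in> fixed act UNIV A"
    proof -
      have "x \<in> fixed act UNIV A" using xy(2) a mcomm_A0_elem_subset_fixed by blast
      then have "u - x \<in> fixed act UNIV A"
        using u by (intro add_subgroup_diff add_subgroup_fixed A_subset)
      then show ?thesis using xy(1) by simp
    qed
    ultimately have "y = 0" using fixed_inter_mcomm_eq_zero xy(3) by blast
    then show "u \<in> mcomm act UNIV {a}" using xy by simp
  qed
qed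

lemma mcomm_eq_fixed_A0_elem:
  assumes a: "a \<in> A0 act A - {\<one>}"
  shows "mcomm act UNIV A = fixed act UNIV {a}"
proof
  show "mcomm act UNIV A \<subseteq> fixed act UNIV {a}"
    using a by (simp add: mcomm_subset_fixed_A0_elem)
  show "fixed act UNIV {a} \<subseteq> mcomm act UNIV A"
  proof
    fix v assume v: "v \<in> fixed act UNIV {a}"
    obtain e where e: "e \<in> A0 act B - {\<one>}" using A0_conj_mem_B0[OF a] .
    obtain x y where xy: "v = x + y" "x \<in> mcomm act UNIV {e}" "y \<in> mcomm act UNIV A"
      using rank_one_module.mcomm_elem_plus_mcomm_eq_UNIV[OF swap] e
      by (blast dest: mem_A0_iff[THEN iffD1])
    have "x \<in> fixed act UNIV B"
      using xy(2) e rank_one_module.mcomm_A0_elem_subset_fixed[OF swap] by blast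
    moreover have "act x a = x"
    proof -
      have ac: "a \<in> carrier G" using a A_subset by (auto simp: mem_A0_iff)
      have "act v a = v" using v by (simp add: fixed_def)
      moreover have "act y a = y" using xy(3) a by (simp add: mem_A0_iff)
      moreover have "x = v - y" using xy(1) by simp
      ultimately show ?thesis using ac by (simp add: act_diff)
    qed
    ultimately have "x = 0"
      using a by (intro fixed_B_and_elem_eq_zero) (auto simp: mem_A0_iff)
    then show "v \<in> mcomm act UNIV A" using xy by simp
  qed
qed

lemma fixed_eq_mcomm_A0:
  assumes "a \<in> A0 act A - {\<one>}"
  shows "fixed act UNIV A = mcomm act UNIV (A0 act A)"
proof
  show "fixed act UNIV A \<subseteq> mcomm act UNIV (A0 act A)"
    using assms fixed_eq_mcomm_A0_elem mcomm_mono[of "{a}" "A0 act A"] by blast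
  show "mcomm act UNIV (A0 act A) \<subseteq> fixed act UNIV A"
    by (intro mcomm_least add_subgroup_fixed A_subset) (auto simp: mem_A0_iff)
qed

lemma fixed_direct_sum_mcomm:
  assumes a: "a \<in> A0 act A - {\<one>}"
  shows "fixed act UNIV A \<inter> mcomm act UNIV B = {0}"
    and "{c + w | c w. c \<in> fixed act UNIV A \<and> w \<in> mcomm act UNIV B} = UNIV"
proof -
  obtain e where "e \<in> A0 act B - {\<one>}" using A0_conj_mem_B0[OF a] .
  then show "fixed act UNIV A \<inter> mcomm act UNIV B = {0}" by (rule fixed_inter_mcomm_eq_zero)
  show "{c + w | c w. c \<in> fixed act UNIV A \<and> w \<in> mcomm act UNIV B} = UNIV"
    using mcomm_elem_plus_mcomm_eq_UNIV[of a] a fixed_eq_mcomm_A0_elem[OF a]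
    by (auto simp: mem_A0_iff)
qed

lemma fixed_eq_mcomm_mcomm_if_nonabelian:
  assumes a: "a \<in> A0 act A - {\<one>}"
    and cube: "mcomm act (mcomm act (mcomm act UNIV A) A) A = {0}"
    and xy: "x \<in> A" "y \<in> A" "x \<otimes> y \<noteq> y \<otimes> x"
  shows "fixed act UNIV A = mcomm act (mcomm act UNIV A) A"
proof -
  define c where "c = inv x \<otimes> inv y \<otimes> x \<otimes> y"
  have xc: "x \<in> carrier G" and yc: "y \<in> carrier G" using xy A_subset by blast+
  have "c \<noteq> \<one>"
  proof
    assume "c = \<one>"
    have "y \<otimes> x \<otimes> c = x \<otimes> y" unfolding c_def using xc yc by (simp add: m_assoc)
    then show False using \<open>c = \<one>\<close> xy(3) xc yc by simp
  qed
  moreover have "c \<in> A0 act A"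
    unfolding c_def using rank_one cube xy by (intro commutator_mem_A0) (auto simp: rank_one_group_def)
  ultimately have "fixed act UNIV A = mcomm act UNIV {c}"
    by (intro fixed_eq_mcomm_A0_elem) blast
  also have "\<dots> \<subseteq> mcomm act (mcomm act UNIV A) A"
    unfolding c_def using xy A_subset by (intro mcomm_least add_subgroup_mcomm) (auto intro: act_commutator_mem)
  also have "\<dots> \<subseteq> fixed act UNIV A"
    using cube by (rule mcomm_eq_zero_imp_fixed)
  finally show ?thesis by blast
qed

end

theorem lemma3p11:
  fixes G :: "('g, 'b) monoid_scheme" and A B :: "'g set"
    and act :: "'v::ab_group_add \<Rightarrow> 'g \<Rightarrow> 'v"
  assumes "rank_one_group G A B"
    and "ZG_module G act"
    and "mcomm act (mcomm act (mcomm act UNIV A) A) A = {0}"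
    and "mcomm act (mcomm act (mcomm act UNIV (carrier G)) (carrier G)) (carrier G) \<noteq> {0}"
    and "mcomm act UNIV (carrier G) = UNIV"
    and "fixed act UNIV (carrier G) = {0}"
    and "centr_on act A (mcomm act UNIV A) \<inter> centr_quot act A (fixed act UNIV A) \<noteq> {monoid.one G}"
  shows "(fixed act UNIV A \<inter> mcomm act UNIV B = {0}
          \<and> {c + w | c w. c \<in> fixed act UNIV A \<and> w \<in> mcomm act UNIV B} = UNIV)
       \<and> (let A0 = centr_on act A (mcomm act UNIV A) \<inter> centr_quot act A (fixed act UNIV A) in
            fixed act UNIV A = mcomm act UNIV A0
          \<and> (\<forall>a \<in> A0 - {monoid.one G}. fixed act UNIV A = mcomm act UNIV {a})
          \<and> (\<forall>a \<in> A0 - {monoid.one G}. mcomm act UNIV A = fixed act UNIV {a}))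
       \<and> (\<not> (\<forall>x \<in> A. \<forall>y \<in> A. monoid.mult G x y = monoid.mult G y x)
            \<longrightarrow> fixed act UNIV A = mcomm act (mcomm act UNIV A) A)"
proof -
  have "group G" using assms(1) unfolding rank_one_group_def by blast
  interpret rank_one_module G act A B
    by (intro rank_one_module.intro right_ZG_module.intro right_ZG_module_axioms.intro
        rank_one_module_axioms.intro \<open>group G\<close> assms(1,2,5,6))
  obtain a where a: "a \<in> A0 act A - {\<one>\<^bsub>G\<^esub>}"
    using assms(7) one_mem_A0 unfolding A0_def by blast
  show ?thesis
    unfolding Let_def A0_def[symmetric]
  proof (intro conjI ballI impI)
    show "fixed act UNIV A \<inter> mcomm act UNIV B = {0}"
      and "{c + w | c w. c \<in> fixed act UNIV A \<and> w \<in> mcomm act UNIV B} = UNIV"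
      using fixed_direct_sum_mcomm[OF a] by blast+
    show "fixed act UNIV A = mcomm act UNIV (A0 act A)" using fixed_eq_mcomm_A0[OF a] .
    show "fixed act UNIV A = mcomm act UNIV {a'}" if "a' \<in> A0 act A - {\<one>\<^bsub>G\<^esub>}" for a'
      using fixed_eq_mcomm_A0_elem[OF that] .
    show "mcomm act UNIV A = fixed act UNIV {a'}" if "a' \<in> A0 act A - {\<one>\<^bsub>G\<^esub>}" for a'
      using mcomm_eq_fixed_A0_elem[OF that] .
    show "fixed act UNIV A = mcomm act (mcomm act UNIV A) A"
      if "\<not> (\<forall>x \<in> A. \<forall>y \<in> A. x \<otimes>\<^bsub>G\<^esub> y = y \<otimes>\<^bsub>G\<^esub> x)"
      using that fixed_eq_mcomm_mcomm_if_nonabelian[OF a assms(3)] by blast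
  qed
qed

end
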